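(* Let $\Lambda$ be a weight function with polynomial growth and $\rho\in(0,\tfrac1\mu]$. Let $\sigma\in M^0_{\rho,\Lambda}$ and let $F$ be a $C^\infty$ function on the complex plane $\mathbb{C}$ (viewed as $\mathbb{R}^2$). Then $F\circ\sigma\in M^0_{\rho,\Lambda}$.
   Context: A positive function $\Lambda\in C^\infty(\mathbb{R}^n)$ is a weight function with polynomial growth if there are constants $0<\mu_0\le\mu_1$, $0<C_0\le C_1$ with $C_0(1+|\xi|)^{\mu_0}\le\Lambda(\xi)\le C_1(1+|\xi|)^{\mu_1}$ for all $\xi$, and there is a real $\mu\ge\mu_1$ such that for all multi-indices $\alpha,\gamma$ with $\gamma_j\in\{0,1\}$ there is $C_{\alpha,\gamma}>0$ with $|\xi^\gamma(\partial^{\alpha+\gamma}\Lambda)(\xi)|\le C_{\alpha,\gamma}\Lambda(\xi)^{1-|\alpha|/\mu}$. For $m\in\mathbb{R}$ and $\rho\in(0,1/\mu]$, $S^m_{\rho,\Lambda}$ is the set of $\sigma\in C^\infty(\mathbb{R}^n\times\mathbb{R}^n)$ such that for all multi-indices $\alpha,\beta$ there is $C_{\alpha,\beta}>0$ with $|\partial_x^\alpha\partial_\xi^\beta\sigma(x,\xi)|\le C_{\alpha,\beta}\Lambda(\xi)^{m-\rho|\beta|}$; $M^m_{\rho,\Lambda}$ is the set of $\sigma$ such that $\xi^\gamma\partial_\xi^\gamma\sigma\in S^m_{\rho,\Lambda}$ for every multi-index $\gamma$ with all $\gamma_j\in\{0,1\}$. *)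

theory Defs
  imports "HOL-Analysis.Analysis"
begin

definition dd :: "'a::real_normed_vector \<Rightarrow> ('a \<Rightarrow> 'b::real_normed_vector) \<Rightarrow> 'a \<Rightarrow> 'b" where
  "dd v f z = vector_derivative (\<lambda>t. f (z + t *\<^sub>R v)) (at 0)"

fun iter_dd :: "'a::real_normed_vector list \<Rightarrow> ('a \<Rightarrow> 'b::real_normed_vector) \<Rightarrow> 'a \<Rightarrow> 'b" where
  "iter_dd [] f = f"
| "iter_dd (v # vs) f = dd v (iter_dd vs f)"

definition smooth :: "('a::euclidean_space \<Rightarrow> 'b::real_normed_vector) \<Rightarrow> bool" where
  "smooth f \<longleftrightarrow> (\<forall>vs \<in> lists Basis.
      continuous_on UNIV (iter_dd vs f) \<and>
      (\<forall>v \<in> Basis. \<forall>z. (\<lambda>t. iter_dd vs f (z + t *\<^sub>R v)) differentiable (at 0)))"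

definition idx_enum :: "'n::finite list" where
  "idx_enum = (SOME xs. distinct xs \<and> set xs = UNIV)"

definition mabs :: "('n::finite \<Rightarrow> nat) \<Rightarrow> nat" where
  "mabs \<alpha> = (\<Sum>j\<in>UNIV. \<alpha> j)"

definition mpow :: "real^'n::finite \<Rightarrow> ('n \<Rightarrow> nat) \<Rightarrow> real" where
  "mpow \<xi> \<gamma> = (\<Prod>j\<in>UNIV. (\<xi> $ j) ^ \<gamma> j)"

definition mdirs :: "('n::finite \<Rightarrow> 'a) \<Rightarrow> ('n \<Rightarrow> nat) \<Rightarrow> 'a list" where
  "mdirs e \<alpha> = concat (map (\<lambda>i. replicate (\<alpha> i) (e i)) idx_enum)"

definition Dm :: "('n::finite \<Rightarrow> nat) \<Rightarrow> (real^'n \<Rightarrow> 'b::real_normed_vector) \<Rightarrow> real^'n \<Rightarrow> 'b" where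
  "Dm \<alpha> f = iter_dd (mdirs (\<lambda>i. axis i 1) \<alpha>) f"

definition Dxxi :: "('n::finite \<Rightarrow> nat) \<Rightarrow> ('n \<Rightarrow> nat) \<Rightarrow>
    ((real^'n) \<times> (real^'n) \<Rightarrow> 'b::real_normed_vector) \<Rightarrow> (real^'n) \<times> (real^'n) \<Rightarrow> 'b" where
  "Dxxi \<alpha> \<beta> f = iter_dd (mdirs (\<lambda>i. (axis i 1, 0)) \<alpha> @ mdirs (\<lambda>i. (0, axis i 1)) \<beta>) f"

definition weight_fn :: "(real^'n::finite \<Rightarrow> real) \<Rightarrow> real \<Rightarrow> bool" where
  "weight_fn \<Lambda> \<mu> \<longleftrightarrow> smooth \<Lambda> \<and> (\<forall>\<xi>. \<Lambda> \<xi> > 0) \<and>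
    (\<exists>\<mu>0 \<mu>1 C0 C1. 0 < \<mu>0 \<and> \<mu>0 \<le> \<mu>1 \<and> 0 < C0 \<and> C0 \<le> C1 \<and> \<mu>1 \<le> \<mu> \<and>
       (\<forall>\<xi>. C0 * (1 + norm \<xi>) powr \<mu>0 \<le> \<Lambda> \<xi> \<and> \<Lambda> \<xi> \<le> C1 * (1 + norm \<xi>) powr \<mu>1)) \<and>
    (\<forall>\<alpha> \<gamma>. (\<forall>j. \<gamma> j \<le> 1) \<longrightarrow>
       (\<exists>C>0. \<forall>\<xi>. \<bar>mpow \<xi> \<gamma> * Dm (\<lambda>j. \<alpha> j + \<gamma> j) \<Lambda> \<xi>\<bar>
                   \<le> C * \<Lambda> \<xi> powr (1 - real (mabs \<alpha>) / \<mu>)))"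

definition S_class :: "real \<Rightarrow> real \<Rightarrow> (real^'n::finite \<Rightarrow> real) \<Rightarrow>
    ((real^'n) \<times> (real^'n) \<Rightarrow> complex) set" where
  "S_class m \<rho> \<Lambda> = {\<sigma>. smooth \<sigma> \<and>
     (\<forall>\<alpha> \<beta>. \<exists>C>0. \<forall>x \<xi>. norm (Dxxi \<alpha> \<beta> \<sigma> (x, \<xi>)) \<le> C * \<Lambda> \<xi> powr (m - \<rho> * real (mabs \<beta>)))}"

definition M_class :: "real \<Rightarrow> real \<Rightarrow> (real^'n::finite \<Rightarrow> real) \<Rightarrow>
    ((real^'n) \<times> (real^'n) \<Rightarrow> complex) set" where
  "M_class m \<rho> \<Lambda> = {\<sigma>. \<forall>\<gamma>. (\<forall>j. \<gamma> j \<le> 1) \<longrightarrow>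
     (\<lambda>(x, \<xi>). complex_of_real (mpow \<xi> \<gamma>) * Dxxi (\<lambda>_. 0) \<gamma> \<sigma> (x, \<xi>)) \<in> S_class m \<rho> \<Lambda>}"

end

theory Submission
  imports Defs "HOL-Library.Sublist"
begin

text \<open>
  Membership in \<open>M\<^sup>0\<close> is a family of bounds
  \<open>\<bar>X\<^sub>1 \<dots> X\<^sub>k \<sigma>\<bar> \<le> C \<Lambda>(\<xi>)\<^sup>-\<^sup>r\<close> for words in the first-order operators
  \<open>\<partial>\<^sub>x\<^sub>j\<close>, \<open>\<partial>\<^sub>\<xi>\<^sub>j\<close> and \<open>\<xi>\<^sub>j \<partial>\<^sub>\<xi>\<^sub>j\<close>, where \<open>r\<close> is \<open>\<rho>\<close> times the number of
  letters \<open>\<partial>\<^sub>\<xi>\<^sub>j\<close>; the admissible words are closed under taking subwords. Every such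
  operator \<open>X\<close> is a derivation and obeys the chain rule
  \<open>X(F \<circ> \<sigma>) = Re(X\<sigma>) (\<partial>\<^sub>1F \<circ> \<sigma>) + Im(X\<sigma>) (\<partial>\<^sub>iF \<circ> \<sigma>)\<close>. Peeling off the innermost
  letter and distributing the rest of the word over the two factors by the Leibniz rule, the bound
  for \<open>F \<circ> \<sigma>\<close> along a word follows by induction on its length from the bounds for \<open>\<sigma>\<close>
  along subwords, applied to the smooth functions \<open>\<partial>\<^sub>1F\<close> and \<open>\<partial>\<^sub>iF\<close> in place of \<open>F\<close>.
\<close>

section \<open>Derivatives along lines\<close>

definition differentiable_along :: "'a::real_normed_vector \<Rightarrow> ('a \<Rightarrow> 'b::real_normed_vector) \<Rightarrow> bool" where
  "differentiable_along v f \<longleftrightarrow> (\<forall>z. (\<lambda>t. f (z + t *\<^sub>R v)) differentiable (at 0))"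

lemma has_vector_derivative_dd:
  "differentiable_along v f \<Longrightarrow> ((\<lambda>t. f (z + t *\<^sub>R v)) has_vector_derivative dd v f z) (at 0)"
  unfolding differentiable_along_def dd_def using vector_derivative_works by blast

lemma differentiable_alongI:
  "(\<And>z. ((\<lambda>t. f (z + t *\<^sub>R v)) has_vector_derivative D z) (at 0)) \<Longrightarrow> differentiable_along v f"
  unfolding differentiable_along_def using differentiableI_vector by blast

lemma dd_eqI: "((\<lambda>t. f (z + t *\<^sub>R v)) has_vector_derivative D) (at 0) \<Longrightarrow> dd v f z = D"
  unfolding dd_def by (rule vector_derivative_at)

lemma
  assumes "differentiable_along v f" "differentiable_along v g"
  shows differentiable_along_add: "differentiable_along v (\<lambda>z. f z + g z)"
    and dd_add: "dd v (\<lambda>z. f z + g z) = (\<lambda>z. dd v f z + dd v g z)"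
proof -
  have deriv: "((\<lambda>t. f (z + t *\<^sub>R v) + g (z + t *\<^sub>R v)) has_vector_derivative dd v f z + dd v g z) (at 0)" for z
    using has_vector_derivative_dd[OF assms(1)] has_vector_derivative_dd[OF assms(2)]
    by (rule has_vector_derivative_add)
  show "differentiable_along v (\<lambda>z. f z + g z)"
    by (rule differentiable_alongI) (rule deriv)
  show "dd v (\<lambda>z. f z + g z) = (\<lambda>z. dd v f z + dd v g z)"
    by (rule ext, rule dd_eqI) (rule deriv)
qed

lemma
  fixes prod :: "'b::real_normed_vector \<Rightarrow> 'c::real_normed_vector \<Rightarrow> 'd::real_normed_vector"
  assumes "bounded_bilinear prod" "differentiable_along v f" "differentiable_along v g"
  shows differentiable_along_bilinear: "differentiable_along v (\<lambda>z. prod (f z) (g z))"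
    and dd_bilinear: "dd v (\<lambda>z. prod (f z) (g z)) = (\<lambda>z. prod (f z) (dd v g z) + prod (dd v f z) (g z))"
proof -
  have deriv: "((\<lambda>t. prod (f (z + t *\<^sub>R v)) (g (z + t *\<^sub>R v))) has_vector_derivative
      prod (f z) (dd v g z) + prod (dd v f z) (g z)) (at 0)" for z
    using bounded_bilinear.has_vector_derivative[OF assms(1)
        has_vector_derivative_dd[OF assms(2)] has_vector_derivative_dd[OF assms(3)]]
    by simp
  show "differentiable_along v (\<lambda>z. prod (f z) (g z))"
    by (rule differentiable_alongI) (rule deriv)
  show "dd v (\<lambda>z. prod (f z) (g z)) = (\<lambda>z. prod (f z) (dd v g z) + prod (dd v f z) (g z))"
    by (rule ext, rule dd_eqI) (rule deriv)
qed

lemma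
  fixes L :: "'b::real_normed_vector \<Rightarrow> 'c::real_normed_vector"
  assumes "bounded_linear L" "differentiable_along v f"
  shows differentiable_along_linear: "differentiable_along v (\<lambda>z. L (f z))"
    and dd_linear: "dd v (\<lambda>z. L (f z)) = (\<lambda>z. L (dd v f z))"
proof -
  have deriv: "((\<lambda>t. L (f (z + t *\<^sub>R v))) has_vector_derivative L (dd v f z)) (at 0)" for z
    using bounded_linear.has_vector_derivative[OF assms(1) has_vector_derivative_dd[OF assms(2)]] .
  show "differentiable_along v (\<lambda>z. L (f z))"
    by (rule differentiable_alongI) (rule deriv)
  show "dd v (\<lambda>z. L (f z)) = (\<lambda>z. L (dd v f z))"
    by (rule ext, rule dd_eqI) (rule deriv)
qed

lemma
  assumes "\<And>w. (F has_derivative F' w) (at w)" "differentiable_along v s"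
  shows differentiable_along_compose: "differentiable_along v (\<lambda>z. F (s z))"
    and dd_compose: "dd v (\<lambda>z. F (s z)) = (\<lambda>z. F' (s z) (dd v s z))"
proof -
  have deriv: "((\<lambda>t. F (s (z + t *\<^sub>R v))) has_vector_derivative F' (s z) (dd v s z)) (at 0)" for z
  proof -
    have "((\<lambda>t. s (z + t *\<^sub>R v)) has_derivative (\<lambda>t. t *\<^sub>R dd v s z)) (at 0)"
      using has_vector_derivative_dd[OF assms(2)] by (simp add: has_vector_derivative_def)
    moreover have "(F has_derivative F' (s z)) (at ((\<lambda>t. s (z + t *\<^sub>R v)) 0))"
      using assms(1) by simp
    ultimately have "((\<lambda>t. F (s (z + t *\<^sub>R v))) has_derivative (\<lambda>t. F' (s z) (t *\<^sub>R dd v s z))) (at 0)"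
      by (rule has_derivative_compose)
    then show ?thesis
      using linear.scaleR[OF has_derivative_linear[OF assms(1)]] by (simp add: has_vector_derivative_def)
  qed
  show "differentiable_along v (\<lambda>z. F (s z))"
    by (rule differentiable_alongI) (rule deriv)
  show "dd v (\<lambda>z. F (s z)) = (\<lambda>z. F' (s z) (dd v s z))"
    by (rule ext, rule dd_eqI) (rule deriv)
qed

lemma dd_const: "dd v (\<lambda>_. c) = (\<lambda>_. 0)"
  by (rule ext, rule dd_eqI) (rule has_vector_derivative_const)

lemma differentiable_along_const: "differentiable_along v (\<lambda>_. c)"
  by (rule differentiable_alongI) (rule has_vector_derivative_const)

lemma
  assumes "bounded_linear L"
  shows differentiable_along_bounded_linear: "differentiable_along v L"
    and dd_bounded_linear: "dd v L = (\<lambda>_. L v)"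
proof -
  have deriv: "((\<lambda>t. L (z + t *\<^sub>R v)) has_vector_derivative L v) (at 0)" for z
  proof -
    have "((\<lambda>t. z + t *\<^sub>R v) has_vector_derivative v) (at 0)"
      by (auto intro!: derivative_eq_intros)
    from bounded_linear.has_vector_derivative[OF assms this] show ?thesis .
  qed
  show "differentiable_along v L"
    by (rule differentiable_alongI) (rule deriv)
  show "dd v L = (\<lambda>_. L v)"
    by (rule ext, rule dd_eqI) (rule deriv)
qed

lemma has_vector_derivative_dd_at:
  assumes "differentiable_along v f"
  shows "((\<lambda>t. f (z + t *\<^sub>R v)) has_vector_derivative dd v f (z + t0 *\<^sub>R v)) (at t0)"
proof -
  have shift: "((\<lambda>t. t - t0) has_vector_derivative 1) (at t0)"
    by (auto intro!: derivative_eq_intros)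
  have "((\<lambda>t. f (z + t0 *\<^sub>R v + t *\<^sub>R v)) has_vector_derivative dd v f (z + t0 *\<^sub>R v)) (at (t0 - t0))"
    using has_vector_derivative_dd[OF assms] by simp
  from vector_diff_chain_at[OF shift this]
  have "((\<lambda>t. f (z + t0 *\<^sub>R v + t *\<^sub>R v)) \<circ> (\<lambda>t. t - t0) has_vector_derivative dd v f (z + t0 *\<^sub>R v)) (at t0)"
    by simp
  moreover have "(\<lambda>t. f (z + t0 *\<^sub>R v + t *\<^sub>R v)) \<circ> (\<lambda>t. t - t0) = (\<lambda>t. f (z + t *\<^sub>R v))"
    by (rule ext) (simp add: scaleR_diff_left)
  ultimately show ?thesis by simp
qed

lemma dd_scaleR_invariant:
  assumes "\<And>z t. a (z + t *\<^sub>R v) = a z" "differentiable_along v g"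
  shows "dd v (\<lambda>z. a z *\<^sub>R g z) = (\<lambda>z. a z *\<^sub>R dd v g z)"
proof (rule ext, rule dd_eqI)
  fix z
  show "((\<lambda>t. a (z + t *\<^sub>R v) *\<^sub>R g (z + t *\<^sub>R v)) has_vector_derivative a z *\<^sub>R dd v g z) (at 0)"
    unfolding assms(1)
    by (rule bounded_linear.has_vector_derivative[OF bounded_linear_scaleR_right has_vector_derivative_dd[OF assms(2)]])
qed

lemma iter_dd_append: "iter_dd (vs @ ws) f = iter_dd vs (iter_dd ws f)"
  by (induction vs) auto

section \<open>Smooth functions\<close>

lemma ball_lists_length_less_Suc:
  "(\<forall>vs\<in>lists B. length vs < Suc k \<longrightarrow> P vs) \<longleftrightarrow>
     P [] \<and> (\<forall>b\<in>B. \<forall>vs\<in>lists B. length vs < k \<longrightarrow> P (vs @ [b]))"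
proof (intro iffI conjI ballI impI)
  fix vs assume "vs \<in> lists B" "length vs < Suc k"
    and "P [] \<and> (\<forall>b\<in>B. \<forall>vs\<in>lists B. length vs < k \<longrightarrow> P (vs @ [b]))"
  then show "P vs" by (cases vs rule: rev_cases) auto
qed auto

fun smooth_upto :: "nat \<Rightarrow> ('a::euclidean_space \<Rightarrow> 'b::real_normed_vector) \<Rightarrow> bool" where
  "smooth_upto 0 f \<longleftrightarrow> True"
| "smooth_upto (Suc k) f \<longleftrightarrow> continuous_on UNIV f \<and>
     (\<forall>b\<in>Basis. differentiable_along b f \<and> smooth_upto k (dd b f))"

lemma smooth_upto_iff:
  "smooth_upto k f \<longleftrightarrow> (\<forall>vs\<in>lists Basis. length vs < k \<longrightarrow>
     continuous_on UNIV (iter_dd vs f) \<and> (\<forall>b\<in>Basis. differentiable_along b (iter_dd vs f)))"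
proof (induction k arbitrary: f)
  case (Suc k)
  show ?case
    by (simp add: ball_lists_length_less_Suc Suc.IH iter_dd_append) blast
qed simp

lemma smooth_iff_smooth_upto: "smooth f \<longleftrightarrow> (\<forall>k. smooth_upto k f)"
  unfolding smooth_def smooth_upto_iff differentiable_along_def by (metis lessI)

lemma smooth_upto_Suc_imp: "smooth_upto (Suc k) f \<Longrightarrow> smooth_upto k f"
  by (induction k arbitrary: f) auto

lemma smooth_unfold:
  "smooth f \<longleftrightarrow> continuous_on UNIV f \<and> (\<forall>b\<in>Basis. differentiable_along b f \<and> smooth (dd b f))"
  unfolding smooth_iff_smooth_upto by (metis smooth_upto.simps(2) smooth_upto_Suc_imp)

lemma smooth_upto_const: "smooth_upto k (\<lambda>_. c)"
  by (induction k arbitrary: c) (auto simp: dd_const differentiable_along_const)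

lemma smooth_upto_bounded_linear: "bounded_linear L \<Longrightarrow> smooth_upto k L"
  by (cases k) (auto simp: dd_bounded_linear differentiable_along_bounded_linear
      smooth_upto_const linear_continuous_on)

lemma smooth_upto_add:
  "smooth_upto k f \<Longrightarrow> smooth_upto k g \<Longrightarrow> smooth_upto k (\<lambda>z. f z + g z)"
proof (induction k arbitrary: f g)
  case (Suc k)
  then show ?case
    by (auto simp: dd_add differentiable_along_add intro: continuous_on_add)
qed simp

lemma smooth_upto_linear:
  fixes L :: "'b::real_normed_vector \<Rightarrow> 'c::real_normed_vector"
  assumes "bounded_linear L"
  shows "smooth_upto k f \<Longrightarrow> smooth_upto k (\<lambda>z. L (f z))"
proof (induction k arbitrary: f)
  case (Suc k)
  then show ?case
    by (auto simp: dd_linear[OF assms] differentiable_along_linear[OF assms]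
        intro: bounded_linear.continuous_on[OF assms])
qed simp

lemma smooth_upto_bilinear:
  fixes prod :: "'b::real_normed_vector \<Rightarrow> 'c::real_normed_vector \<Rightarrow> 'd::real_normed_vector"
  assumes "bounded_bilinear prod"
  shows "smooth_upto k f \<Longrightarrow> smooth_upto k g \<Longrightarrow> smooth_upto k (\<lambda>z. prod (f z) (g z))"
proof (induction k arbitrary: f g)
  case (Suc k)
  have "smooth_upto k f" "smooth_upto k g"
    using Suc.prems smooth_upto_Suc_imp by blast+
  then have "smooth_upto k (\<lambda>z. prod (f z) (dd b g z) + prod (dd b f z) (g z))" if "b \<in> Basis" for b
    using Suc that by (auto intro!: smooth_upto_add)
  with Suc.prems show ?case
    by (auto simp: dd_bilinear[OF assms] differentiable_along_bilinear[OF assms]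
        intro: bounded_bilinear.continuous_on[OF assms])
qed simp

lemma smooth_imp_continuous: "smooth f \<Longrightarrow> continuous_on UNIV f"
  and smooth_imp_differentiable_along: "smooth f \<Longrightarrow> b \<in> Basis \<Longrightarrow> differentiable_along b f"
  and smooth_dd: "smooth f \<Longrightarrow> b \<in> Basis \<Longrightarrow> smooth (dd b f)"
  using smooth_unfold by blast+

lemma smooth_iter_dd: "smooth f \<Longrightarrow> set vs \<subseteq> Basis \<Longrightarrow> smooth (iter_dd vs f)"
  by (induction vs) (auto intro: smooth_dd)

lemma smooth_const: "smooth (\<lambda>_. c)"
  by (simp add: smooth_iff_smooth_upto smooth_upto_const)

lemma smooth_bounded_linear: "bounded_linear L \<Longrightarrow> smooth L"
  by (simp add: smooth_iff_smooth_upto smooth_upto_bounded_linear)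

lemma smooth_linear:
  fixes L :: "'b::real_normed_vector \<Rightarrow> 'c::real_normed_vector"
  shows "bounded_linear L \<Longrightarrow> smooth f \<Longrightarrow> smooth (\<lambda>z. L (f z))"
  by (simp add: smooth_iff_smooth_upto smooth_upto_linear)

lemma smooth_bilinear:
  fixes prod :: "'b::real_normed_vector \<Rightarrow> 'c::real_normed_vector \<Rightarrow> 'd::real_normed_vector"
  shows "bounded_bilinear prod \<Longrightarrow> smooth f \<Longrightarrow> smooth g \<Longrightarrow> smooth (\<lambda>z. prod (f z) (g z))"
  by (simp add: smooth_iff_smooth_upto smooth_upto_bilinear)

lemma smooth_complex_has_derivative:
  fixes F :: "complex \<Rightarrow> 'b::real_normed_vector"
  assumes "smooth F"
  shows "(F has_derivative (\<lambda>h. Re h *\<^sub>R dd 1 F w + Im h *\<^sub>R dd \<i> F w)) (at w)"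
proof -
  have re: "((\<lambda>x. F (Complex x y)) has_derivative (\<lambda>t. t *\<^sub>R dd 1 F (Complex x y))) (at x)" for x y
  proof -
    have "Complex 0 y + t *\<^sub>R 1 = Complex t y" for t
      by (simp add: complex_eq_iff)
    then show ?thesis
      using has_vector_derivative_dd_at[OF smooth_imp_differentiable_along[OF assms complex_Basis_1], of "Complex 0 y" x]
      by (simp add: has_vector_derivative_def)
  qed
  have im: "((\<lambda>y. F (Complex x y)) has_derivative blinfun_scaleR_left (dd \<i> F (Complex x y))) (at y)" for x y
  proof -
    have "Complex x 0 + t *\<^sub>R \<i> = Complex x t" for t
      by (simp add: complex_eq_iff)
    then show ?thesis
      using has_vector_derivative_dd_at[OF smooth_imp_differentiable_along[OF assms complex_Basis_i], of "Complex x 0" y]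
      by (simp add: has_vector_derivative_def)
  qed
  have "continuous_on UNIV (\<lambda>p. blinfun_scaleR_left (dd \<i> F (Complex (fst p) (snd p))))"
  proof (rule continuous_on_compose2[OF bounded_linear.continuous_on[OF bounded_linear_blinfun_scaleR_left continuous_on_id]])
    show "continuous_on UNIV (\<lambda>p. dd \<i> F (Complex (fst p) (snd p)))"
      using smooth_imp_continuous[OF smooth_dd[OF assms complex_Basis_i]]
      by (rule continuous_on_compose2) (auto simp: Complex_eq intro!: continuous_intros)
  qed (rule subset_UNIV)
  then have "((\<lambda>(x, y). F (Complex x y)) has_derivative
      (\<lambda>(s, t). s *\<^sub>R dd 1 F (Complex x y) + t *\<^sub>R dd \<i> F (Complex x y))) (at (x, y))" for x y
    using has_derivative_partialsI[OF re im]
    by (simp add: continuous_on_eq_continuous_at split_def)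
  moreover have "((\<lambda>w. (Re w, Im w)) has_derivative (\<lambda>w. (Re w, Im w))) (at w)"
    by (intro bounded_linear_imp_has_derivative bounded_linear_Pair bounded_linear_Re bounded_linear_Im)
  ultimately show ?thesis
    using has_derivative_compose[of "\<lambda>w. (Re w, Im w)"] by fastforce
qed

lemma
  fixes F :: "complex \<Rightarrow> 'b::real_normed_vector"
  assumes "smooth F" "differentiable_along v s"
  shows differentiable_along_smooth_compose: "differentiable_along v (\<lambda>z. F (s z))"
    and dd_smooth_compose: "dd v (\<lambda>z. F (s z)) =
      (\<lambda>z. Re (dd v s z) *\<^sub>R dd 1 F (s z) + Im (dd v s z) *\<^sub>R dd \<i> F (s z))"
  using differentiable_along_compose[OF smooth_complex_has_derivative[OF assms(1)] assms(2)]
    dd_compose[OF smooth_complex_has_derivative[OF assms(1)] assms(2)]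
  by simp_all

lemma smooth_upto_compose:
  fixes F :: "complex \<Rightarrow> 'b::real_normed_vector"
  shows "smooth F \<Longrightarrow> smooth_upto k s \<Longrightarrow> smooth_upto k (\<lambda>z. F (s z))"
proof (induction k arbitrary: F)
  case (Suc k)
  have s: "smooth_upto k s"
    using Suc.prems(2) smooth_upto_Suc_imp by blast
  have "smooth_upto k (\<lambda>z. Re (dd b s z) *\<^sub>R dd 1 F (s z) + Im (dd b s z) *\<^sub>R dd \<i> F (s z))"
    if "b \<in> Basis" for b
    using that Suc.prems(2) Suc.IH[OF smooth_dd[OF Suc.prems(1) complex_Basis_1] s]
      Suc.IH[OF smooth_dd[OF Suc.prems(1) complex_Basis_i] s]
    by (auto intro!: smooth_upto_add smooth_upto_bilinear[OF bounded_bilinear_scaleR]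
        smooth_upto_linear[OF bounded_linear_Re] smooth_upto_linear[OF bounded_linear_Im])
  with Suc.prems show ?case
    by (auto simp: dd_smooth_compose differentiable_along_smooth_compose
        intro: continuous_on_compose2[OF smooth_imp_continuous])
qed simp

lemma smooth_compose:
  fixes F :: "complex \<Rightarrow> 'b::real_normed_vector"
  shows "smooth F \<Longrightarrow> smooth s \<Longrightarrow> smooth (\<lambda>z. F (s z))"
  by (simp add: smooth_iff_smooth_upto smooth_upto_compose)

section \<open>First-order operators and weighted bounds\<close>

text \<open>A pair \<open>(a, v)\<close> stands for the first-order operator \<open>a(z) \<partial>\<^sub>v\<close>.\<close>

definition field_deriv :: "('a::real_normed_vector \<Rightarrow> real) \<times> 'a \<Rightarrow> ('a \<Rightarrow> 'b::real_normed_vector) \<Rightarrow> 'a \<Rightarrow> 'b" where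
  "field_deriv X f = (\<lambda>z. fst X z *\<^sub>R dd (snd X) f z)"

definition iter_field_deriv ::
    "(('a::real_normed_vector \<Rightarrow> real) \<times> 'a) list \<Rightarrow> ('a \<Rightarrow> 'b::real_normed_vector) \<Rightarrow> 'a \<Rightarrow> 'b" where
  "iter_field_deriv Xs f = foldr field_deriv Xs f"

lemma iter_field_deriv_simps [simp]:
  "iter_field_deriv [] f = f"
  "iter_field_deriv (X # Xs) f = field_deriv X (iter_field_deriv Xs f)"
  "iter_field_deriv (Xs @ Ys) f = iter_field_deriv Xs (iter_field_deriv Ys f)"
  by (simp_all add: iter_field_deriv_def)

definition smooth_field :: "('a::euclidean_space \<Rightarrow> real) \<times> 'a \<Rightarrow> bool" where
  "smooth_field X \<longleftrightarrow> smooth (fst X) \<and> snd X \<in> Basis"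

lemma smooth_field_deriv: "smooth_field X \<Longrightarrow> smooth f \<Longrightarrow> smooth (field_deriv X f)"
  unfolding smooth_field_def field_deriv_def
  by (intro smooth_bilinear[OF bounded_bilinear_scaleR] smooth_dd) auto

lemma smooth_iter_field_deriv:
  "\<forall>X\<in>set Xs. smooth_field X \<Longrightarrow> smooth f \<Longrightarrow> smooth (iter_field_deriv Xs f)"
  by (induction Xs) (auto intro: smooth_field_deriv)

lemma field_deriv_add:
  "smooth_field X \<Longrightarrow> smooth f \<Longrightarrow> smooth g \<Longrightarrow>
    field_deriv X (\<lambda>z. f z + g z) = (\<lambda>z. field_deriv X f z + field_deriv X g z)"
  unfolding field_deriv_def smooth_field_def
  by (simp add: dd_add smooth_imp_differentiable_along scaleR_add_right)

lemma iter_field_deriv_add: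
  "\<forall>X\<in>set Xs. smooth_field X \<Longrightarrow> smooth f \<Longrightarrow> smooth g \<Longrightarrow>
    iter_field_deriv Xs (\<lambda>z. f z + g z) = (\<lambda>z. iter_field_deriv Xs f z + iter_field_deriv Xs g z)"
  by (induction Xs) (simp_all add: field_deriv_add smooth_iter_field_deriv)

lemma field_deriv_linear:
  fixes L :: "'b::real_normed_vector \<Rightarrow> 'c::real_normed_vector"
  assumes "bounded_linear L" "smooth_field X" "smooth f"
  shows "field_deriv X (\<lambda>z. L (f z)) = (\<lambda>z. L (field_deriv X f z))"
  using assms unfolding field_deriv_def smooth_field_def
  by (simp add: dd_linear smooth_imp_differentiable_along linear_simps(5))

lemma iter_field_deriv_linear:
  fixes L :: "'b::real_normed_vector \<Rightarrow> 'c::real_normed_vector"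
  assumes "bounded_linear L" "\<forall>X\<in>set Xs. smooth_field X" "smooth f"
  shows "iter_field_deriv Xs (\<lambda>z. L (f z)) = (\<lambda>z. L (iter_field_deriv Xs f z))"
  using assms(2) by (induction Xs) (simp_all add: field_deriv_linear[OF assms(1)] smooth_iter_field_deriv assms(3))

lemma field_deriv_bilinear:
  fixes prod :: "'b::real_normed_vector \<Rightarrow> 'c::real_normed_vector \<Rightarrow> 'd::real_normed_vector"
  assumes "bounded_bilinear prod" "smooth_field X" "smooth f" "smooth g"
  shows "field_deriv X (\<lambda>z. prod (f z) (g z)) =
    (\<lambda>z. prod (f z) (field_deriv X g z) + prod (field_deriv X f z) (g z))"
  using assms unfolding field_deriv_def smooth_field_def
  by (simp add: dd_bilinear smooth_imp_differentiable_along scaleR_add_right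
      bounded_bilinear.scaleR_left bounded_bilinear.scaleR_right)

lemma field_deriv_smooth_compose:
  fixes F :: "complex \<Rightarrow> 'b::real_normed_vector"
  assumes "smooth F" "smooth_field X" "smooth s"
  shows "field_deriv X (\<lambda>z. F (s z)) =
    (\<lambda>z. Re (field_deriv X s z) *\<^sub>R dd 1 F (s z) + Im (field_deriv X s z) *\<^sub>R dd \<i> F (s z))"
  using assms unfolding field_deriv_def smooth_field_def
  by (simp add: dd_smooth_compose smooth_imp_differentiable_along scaleR_add_right)

definition unit_field :: "'a \<Rightarrow> ('a \<Rightarrow> real) \<times> 'a" where
  "unit_field v = (\<lambda>_. 1, v)"

definition euler_field :: "'a::real_inner \<Rightarrow> ('a \<Rightarrow> real) \<times> 'a" where
  "euler_field v = (\<lambda>z. z \<bullet> v, v)"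

lemma euler_field_neq_unit_field: "euler_field v \<noteq> unit_field w"
proof
  assume "euler_field v = unit_field w"
  then have "(\<lambda>z. z \<bullet> v) = (\<lambda>_. 1)"
    by (auto simp: euler_field_def unit_field_def)
  from fun_cong[OF this, of 0] show False
    by simp
qed

lemma smooth_field_unit_field: "v \<in> Basis \<Longrightarrow> smooth_field (unit_field v)"
  by (simp add: smooth_field_def unit_field_def smooth_const)

lemma smooth_field_euler_field: "v \<in> Basis \<Longrightarrow> smooth_field (euler_field v)"
  by (simp add: smooth_field_def euler_field_def smooth_bounded_linear bounded_linear_inner_left)

lemma iter_field_deriv_unit_fields: "iter_field_deriv (map unit_field vs) f = iter_dd vs f"
  by (induction vs) (simp_all add: unit_field_def field_deriv_def)

lemma iter_field_deriv_euler_fields: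
  assumes "smooth f" "distinct ds" "set ds \<subseteq> Basis"
  shows "iter_field_deriv (map euler_field ds) f = (\<lambda>z. (\<Prod>d\<leftarrow>ds. z \<bullet> d) *\<^sub>R iter_dd ds f z)"
  using assms(2,3)
proof (induction ds)
  case (Cons d ds)
  have "(\<Prod>d'\<leftarrow>ds. (z + t *\<^sub>R d) \<bullet> d') = (\<Prod>d'\<leftarrow>ds. z \<bullet> d')" for z t
  proof -
    have "d \<bullet> d' = 0" if "d' \<in> set ds" for d'
      using Cons.prems that by (auto intro: inner_not_same_Basis)
    then show ?thesis
      by (simp add: inner_add_left cong: map_cong)
  qed
  moreover have "differentiable_along d (iter_dd ds f)"
    using Cons.prems smooth_imp_differentiable_along[OF smooth_iter_dd[OF assms(1)]] by simp
  ultimately show ?case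
    using Cons by (simp add: field_deriv_def euler_field_def dd_scaleR_invariant)
qed simp

lemma set_subseq: "subseq xs ys \<Longrightarrow> set xs \<subseteq> set ys"
  by (induction rule: list_emb.induct) auto

lemma subseq_replicate:
  assumes "subseq xs (replicate n a)"
  shows "xs = replicate (length xs) a \<and> length xs \<le> n"
  using set_subseq[OF assms] list_emb_length[OF assms]
  by (auto intro!: replicate_length_same[symmetric] split: if_splits)

lemma subseq_snocE:
  assumes "subseq ys (xs @ [x])"
  obtains "subseq ys xs" | zs where "ys = zs @ [x]" "subseq zs xs"
proof -
  from assms obtain ys1 ys2 where "ys = ys1 @ ys2" "subseq ys1 xs" "subseq ys2 (replicate 1 x)"
    by (auto elim: subseq_appendE)
  moreover have "ys2 = [] \<or> ys2 = [x]"
    using subseq_replicate[OF \<open>subseq ys2 (replicate 1 x)\<close>] by (cases ys2) auto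
  ultimately show thesis
    using that by auto
qed

definition weighted_bound ::
    "('a::real_normed_vector \<Rightarrow> real) \<Rightarrow> (('a \<Rightarrow> real) \<times> 'a \<Rightarrow> real) \<Rightarrow> real \<Rightarrow>
     (('a \<Rightarrow> real) \<times> 'a) list \<Rightarrow> ('a \<Rightarrow> 'b::real_normed_vector) \<Rightarrow> bool" where
  "weighted_bound W c m Xs f \<longleftrightarrow>
     (\<exists>C. \<forall>z. norm (iter_field_deriv Xs f z) \<le> C * W z powr (m - sum_list (map c Xs)))"

text \<open>Subwords are needed because the Leibniz rule distributes a word over both factors.\<close>

definition weighted_bounds ::
    "('a::real_normed_vector \<Rightarrow> real) \<Rightarrow> (('a \<Rightarrow> real) \<times> 'a \<Rightarrow> real) \<Rightarrow> real \<Rightarrow>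
     (('a \<Rightarrow> real) \<times> 'a) list \<Rightarrow> ('a \<Rightarrow> 'b::real_normed_vector) \<Rightarrow> bool" where
  "weighted_bounds W c m Xs f \<longleftrightarrow> (\<forall>Ys. subseq Ys Xs \<longrightarrow> weighted_bound W c m Ys f)"

lemma weighted_bound_snoc_iff:
  "weighted_bound W c m (Xs @ [X]) f \<longleftrightarrow> weighted_bound W c (m - c X) Xs (field_deriv X f)"
  unfolding weighted_bound_def by (simp add: algebra_simps)

lemma weighted_bounds_subseq:
  "weighted_bounds W c m Xs f \<Longrightarrow> subseq Ys Xs \<Longrightarrow> weighted_bounds W c m Ys f"
  unfolding weighted_bounds_def using subseq_order.order_trans by blast

lemma weighted_bounds_snoc:
  "weighted_bounds W c m (Xs @ [X]) f \<Longrightarrow> weighted_bounds W c (m - c X) Xs (field_deriv X f)"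
  unfolding weighted_bounds_def by (metis weighted_bound_snoc_iff list_emb_append_mono subseq_order.order_refl)

lemma weighted_bound_add:
  assumes "\<forall>X\<in>set Xs. smooth_field X" "smooth f" "smooth g"
    and "weighted_bound W c m Xs f" "weighted_bound W c m Xs g"
  shows "weighted_bound W c m Xs (\<lambda>z. f z + g z)"
proof -
  obtain C1 C2 where
    "\<And>z. norm (iter_field_deriv Xs f z) \<le> C1 * W z powr (m - sum_list (map c Xs))"
    "\<And>z. norm (iter_field_deriv Xs g z) \<le> C2 * W z powr (m - sum_list (map c Xs))"
    using assms(4,5) unfolding weighted_bound_def by blast
  then have "norm (iter_field_deriv Xs f z + iter_field_deriv Xs g z)
      \<le> (C1 + C2) * W z powr (m - sum_list (map c Xs))" for z
    by (smt (verit) distrib_right norm_triangle_ineq)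
  then show ?thesis
    unfolding weighted_bound_def iter_field_deriv_add[OF assms(1-3)] by blast
qed

lemma weighted_bounds_linear:
  fixes L :: "'b::real_normed_vector \<Rightarrow> 'c::real_normed_vector"
  assumes "bounded_linear L" "\<forall>X\<in>set Xs. smooth_field X" "smooth f" "weighted_bounds W c m Xs f"
  shows "weighted_bounds W c m Xs (\<lambda>z. L (f z))"
  unfolding weighted_bounds_def
proof (intro allI impI)
  fix Ys assume "subseq Ys Xs"
  then have Ys: "\<forall>X\<in>set Ys. smooth_field X" and "weighted_bound W c m Ys f"
    using assms(2,4) list_emb_set unfolding weighted_bounds_def by fastforce+
  then obtain C where C: "\<And>z. norm (iter_field_deriv Ys f z) \<le> C * W z powr (m - sum_list (map c Ys))"
    unfolding weighted_bound_def by blast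
  obtain K where K: "\<And>x. norm (L x) \<le> norm x * K" "K > 0"
    using bounded_linear.pos_bounded[OF assms(1)] by blast
  have "norm (L (iter_field_deriv Ys f z)) \<le> (C * K) * W z powr (m - sum_list (map c Ys))" for z
    using order_trans[OF K(1) mult_right_mono[OF C less_imp_le[OF K(2)]]] by (simp add: algebra_simps)
  then show "weighted_bound W c m Ys (\<lambda>z. L (f z))"
    unfolding weighted_bound_def iter_field_deriv_linear[OF assms(1) Ys assms(3)] by blast
qed

lemma weighted_bound_Nil_bilinear:
  fixes prod :: "'b::real_normed_vector \<Rightarrow> 'c::real_normed_vector \<Rightarrow> 'd::real_normed_vector"
  assumes "bounded_bilinear prod" "weighted_bound W c m1 [] f" "weighted_bound W c m2 [] g"
  shows "weighted_bound W c (m1 + m2) [] (\<lambda>z. prod (f z) (g z))"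
proof -
  obtain C1 C2 where C: "\<And>z. norm (f z) \<le> C1 * W z powr m1" "\<And>z. norm (g z) \<le> C2 * W z powr m2"
    using assms(2,3) unfolding weighted_bound_def by force
  obtain K where K: "\<And>a b. norm (prod a b) \<le> norm a * norm b * K" "K > 0"
    using bounded_bilinear.pos_bounded[OF assms(1)] by blast
  have "norm (prod (f z) (g z)) \<le> (C1 * C2 * K) * W z powr (m1 + m2)" for z
  proof -
    have "norm (f z) * norm (g z) \<le> (C1 * W z powr m1) * (C2 * W z powr m2)"
      by (rule mult_mono[OF C]) (auto intro: order_trans[OF norm_ge_zero C(1)])
    then have "norm (f z) * norm (g z) * K \<le> (C1 * C2 * K) * W z powr (m1 + m2)"
      using K(2) by (simp add: powr_add algebra_simps)
    then show ?thesis
      using K(1) order_trans by blast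
  qed
  then show ?thesis
    unfolding weighted_bound_def by auto
qed

lemma weighted_bound_bilinear:
  fixes prod :: "'b::real_normed_vector \<Rightarrow> 'c::real_normed_vector \<Rightarrow> 'd::real_normed_vector"
    and f :: "'a::euclidean_space \<Rightarrow> 'b" and g :: "'a \<Rightarrow> 'c"
  assumes prod: "bounded_bilinear prod"
  shows "\<forall>X\<in>set Xs. smooth_field X \<Longrightarrow> smooth f \<Longrightarrow> smooth g \<Longrightarrow>
    weighted_bounds W c m1 Xs f \<Longrightarrow> weighted_bounds W c m2 Xs g \<Longrightarrow>
    weighted_bound W c (m1 + m2) Xs (\<lambda>z. prod (f z) (g z))"
proof (induction Xs arbitrary: f g m1 m2 rule: rev_induct)
  case Nil
  then show ?case
    using weighted_bound_Nil_bilinear[OF prod] list_emb_Nil unfolding weighted_bounds_def by blast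
next
  case (snoc X Xs)
  have fields: "\<forall>X\<in>set Xs. smooth_field X" "smooth_field X"
    using snoc.prems(1) by simp_all
  have Xf: "smooth (field_deriv X f)" and Xg: "smooth (field_deriv X g)"
    using smooth_field_deriv fields(2) snoc.prems(2,3) by blast+
  have "weighted_bound W c (m1 + (m2 - c X)) Xs (\<lambda>z. prod (f z) (field_deriv X g z))"
    using snoc.IH[OF fields(1) snoc.prems(2) Xg] snoc.prems(4,5)
    by (meson weighted_bounds_snoc weighted_bounds_subseq subseq_rev_drop_many subseq_order.order_refl)
  moreover have "weighted_bound W c ((m1 - c X) + m2) Xs (\<lambda>z. prod (field_deriv X f z) (g z))"
    using snoc.IH[OF fields(1) Xf snoc.prems(3)] snoc.prems(4,5)
    by (meson weighted_bounds_snoc weighted_bounds_subseq subseq_rev_drop_many subseq_order.order_refl)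
  ultimately have "weighted_bound W c (m1 + m2 - c X) Xs
      (\<lambda>z. prod (f z) (field_deriv X g z) + prod (field_deriv X f z) (g z))"
    by (auto intro!: weighted_bound_add fields smooth_bilinear[OF prod] Xf Xg snoc.prems simp: algebra_simps)
  then show ?case
    by (simp add: weighted_bound_snoc_iff field_deriv_bilinear[OF prod fields(2) snoc.prems(2,3)])
qed

lemma weighted_bound_Nil_zero_iff:
  assumes "\<And>z. 0 < W z"
  shows "weighted_bound W c 0 [] f \<longleftrightarrow> (\<exists>C. \<forall>z. norm (f z) \<le> C)"
proof -
  have "W z powr 0 = 1" for z
    using assms[of z] by simp
  then show ?thesis
    unfolding weighted_bound_def by simp
qed

lemma weighted_bound_Nil_compose:
  fixes F :: "'b::{real_normed_vector, heine_borel} \<Rightarrow> 'c::real_normed_vector"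
  assumes "\<And>z. 0 < W z" "continuous_on UNIV F" "weighted_bound W c 0 [] s"
  shows "weighted_bound W c 0 [] (\<lambda>z. F (s z))"
proof -
  obtain C where "\<And>z. s z \<in> cball 0 C"
    using assms(3) unfolding weighted_bound_Nil_zero_iff[OF assms(1)] by auto
  moreover have "bounded (F ` cball 0 C)"
    by (intro compact_imp_bounded compact_continuous_image continuous_on_subset[OF assms(2)]) auto
  ultimately show ?thesis
    unfolding weighted_bound_Nil_zero_iff[OF assms(1)] bounded_iff by blast
qed

lemma weighted_bound_snoc_smooth_compose:
  fixes F :: "complex \<Rightarrow> 'b::real_normed_vector" and s :: "'a::euclidean_space \<Rightarrow> complex"
  assumes fields: "\<forall>Y\<in>set Xs. smooth_field Y" "smooth_field X" and F: "smooth F" and s: "smooth s"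
    and F_bounds: "\<And>b. b \<in> Basis \<Longrightarrow> weighted_bounds W c 0 Xs (\<lambda>z. dd b F (s z))"
    and s_bounds: "weighted_bounds W c 0 (Xs @ [X]) s"
  shows "weighted_bound W c 0 (Xs @ [X]) (\<lambda>z. F (s z))"
proof -
  have Xs: "smooth (field_deriv X s)"
    using smooth_field_deriv fields(2) s by blast
  have "weighted_bounds W c (0 - c X) Xs (field_deriv X s)"
    using s_bounds by (rule weighted_bounds_snoc)
  then have Xs_bounds: "weighted_bounds W c (0 - c X) Xs (\<lambda>z. L (field_deriv X s z))"
    and smooth_L: "smooth (\<lambda>z. L (field_deriv X s z))" if "bounded_linear L" for L :: "complex \<Rightarrow> real"
    using weighted_bounds_linear[OF that fields(1) Xs] smooth_linear[OF that Xs] by blast+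
  have smooth_F: "smooth (\<lambda>z. dd b F (s z))" if "b \<in> Basis" for b
    using smooth_compose smooth_dd[OF F that] s by blast
  have terms: "weighted_bound W c (0 - c X) Xs (\<lambda>z. L (field_deriv X s z) *\<^sub>R dd b F (s z))"
    if "bounded_linear L" "b \<in> Basis" for L b
    using weighted_bound_bilinear[OF bounded_bilinear_scaleR fields(1) smooth_L[OF that(1)]
        smooth_F[OF that(2)] Xs_bounds[OF that(1)] F_bounds[OF that(2)]]
    by simp
  have "weighted_bound W c (0 - c X) Xs
      (\<lambda>z. Re (field_deriv X s z) *\<^sub>R dd 1 F (s z) + Im (field_deriv X s z) *\<^sub>R dd \<i> F (s z))"
    by (intro weighted_bound_add[OF fields(1)] terms smooth_bilinear[OF bounded_bilinear_scaleR]
        smooth_L smooth_F complex_Basis_1 complex_Basis_i bounded_linear_Re bounded_linear_Im)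
  then show ?thesis
    by (simp add: weighted_bound_snoc_iff field_deriv_smooth_compose[OF F fields(2) s])
qed

lemma weighted_bounds_smooth_compose:
  fixes F :: "complex \<Rightarrow> 'b::real_normed_vector" and s :: "'a::euclidean_space \<Rightarrow> complex"
  assumes W: "\<And>z. 0 < W z"
  shows "\<forall>X\<in>set Xs. smooth_field X \<Longrightarrow> smooth F \<Longrightarrow> smooth s \<Longrightarrow>
    weighted_bounds W c 0 Xs s \<Longrightarrow> weighted_bounds W c 0 Xs (\<lambda>z. F (s z))"
proof (induction Xs arbitrary: F rule: rev_induct)
  case Nil
  have "weighted_bound W c 0 [] s"
    using Nil.prems(4) unfolding weighted_bounds_def by simp
  then have "weighted_bound W c 0 [] (\<lambda>z. F (s z))"
    by (rule weighted_bound_Nil_compose[OF W smooth_imp_continuous[OF Nil.prems(2)]])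
  then show ?case
    unfolding weighted_bounds_def using list_emb_Nil2 by blast
next
  case (snoc X Xs)
  have fields: "\<forall>Y\<in>set Xs. smooth_field Y" "smooth_field X"
    using snoc.prems(1) by simp_all
  have "weighted_bounds W c 0 Xs s"
    using snoc.prems(4) subseq_rev_drop_many weighted_bounds_subseq by blast
  then have IH: "weighted_bounds W c 0 Xs (\<lambda>z. F (s z))"
    "\<And>b. b \<in> Basis \<Longrightarrow> weighted_bounds W c 0 Xs (\<lambda>z. dd b F (s z))"
    using snoc.IH[OF fields(1) _ snoc.prems(3)] snoc.prems(2) smooth_dd by blast+
  show ?case
    unfolding weighted_bounds_def
  proof (intro allI impI)
    fix Ys assume "subseq Ys (Xs @ [X])"
    then show "weighted_bound W c 0 Ys (\<lambda>z. F (s z))"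
    proof (cases rule: subseq_snocE)
      case 1
      then show ?thesis
        using IH(1) unfolding weighted_bounds_def by blast
    next
      case (2 Zs)
      have "\<forall>Y\<in>set Zs. smooth_field Y"
        using fields(1) set_subseq[OF 2(2)] by blast
      moreover have "weighted_bounds W c 0 Zs (\<lambda>z. dd b F (s z))" if "b \<in> Basis" for b
        using weighted_bounds_subseq[OF IH(2)[OF that] 2(2)] .
      moreover have "weighted_bounds W c 0 (Zs @ [X]) s"
        using weighted_bounds_subseq[OF snoc.prems(4)] 2(2) by simp
      ultimately show ?thesis
        unfolding 2(1) by (rule weighted_bound_snoc_smooth_compose[OF _ fields(2) snoc.prems(2,3)])
    qed
  qed
qed

section \<open>Multi-index direction lists\<close>

lemma distinct_idx_enum: "distinct (idx_enum :: 'n::finite list)"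
  and set_idx_enum [simp]: "set (idx_enum :: 'n list) = UNIV"
proof -
  obtain xs :: "'n list" where "distinct xs \<and> set xs = UNIV"
    using finite_distinct_list[of "UNIV :: 'n set"] by auto
  then have "distinct (idx_enum :: 'n list) \<and> set (idx_enum :: 'n list) = UNIV"
    unfolding idx_enum_def by (rule someI)
  then show "distinct (idx_enum :: 'n list)" "set (idx_enum :: 'n list) = UNIV"
    by simp_all
qed

lemma mdirs_comp: "mdirs (g \<circ> e) \<alpha> = map g (mdirs e \<alpha>)"
  unfolding mdirs_def by (simp add: map_concat o_def)

lemma mdirs_zero [simp]: "mdirs e (\<lambda>_. 0) = []"
  unfolding mdirs_def by simp

lemma set_mdirs: "set (mdirs e \<alpha>) \<subseteq> range e"
  unfolding mdirs_def by auto

lemma sum_list_mdirs: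
  fixes g :: "'a \<Rightarrow> 'b::comm_semiring_1" and e :: "'n::finite \<Rightarrow> 'a"
  shows "sum_list (map g (mdirs e \<alpha>)) = (\<Sum>i\<in>UNIV. of_nat (\<alpha> i) * g (e i))"
proof -
  have "sum_list (map g (concat (map (\<lambda>i. replicate (\<alpha> i) (e i)) xs))) = (\<Sum>i\<leftarrow>xs. of_nat (\<alpha> i) * g (e i))"
    for xs :: "'n list"
    by (induction xs) (simp_all add: sum_list_replicate)
  then show ?thesis
    unfolding mdirs_def using sum.distinct_set_conv_list[OF distinct_idx_enum] set_idx_enum by metis
qed

lemma prod_list_mdirs:
  fixes g :: "'a \<Rightarrow> 'b::comm_monoid_mult" and e :: "'n::finite \<Rightarrow> 'a"
  shows "prod_list (map g (mdirs e \<alpha>)) = (\<Prod>i\<in>UNIV. g (e i) ^ \<alpha> i)"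
proof -
  have "prod_list (map g (concat (map (\<lambda>i. replicate (\<alpha> i) (e i)) xs))) = (\<Prod>i\<leftarrow>xs. g (e i) ^ \<alpha> i)"
    for xs :: "'n list"
    by (induction xs) simp_all
  then show ?thesis
    unfolding mdirs_def using prod.distinct_set_conv_list[OF distinct_idx_enum] set_idx_enum by metis
qed

lemma mdirs_binary:
  fixes e :: "'n::finite \<Rightarrow> 'a"
  assumes "\<forall>i. \<gamma> i \<le> 1"
  shows "mdirs e \<gamma> = map e (filter (\<lambda>i. \<gamma> i \<noteq> 0) idx_enum)"
proof -
  have "concat (map (\<lambda>i. replicate (\<gamma> i) (e i)) xs) = map e (filter (\<lambda>i. \<gamma> i \<noteq> 0) xs)" for xs :: "'n list"
  proof (induction xs)
    case (Cons i xs)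
    then show ?case
      using assms[rule_format, of i] by (cases "\<gamma> i") auto
  qed simp
  then show ?thesis
    unfolding mdirs_def .
qed

lemma distinct_mdirs: "inj e \<Longrightarrow> \<forall>i. \<gamma> i \<le> 1 \<Longrightarrow> distinct (mdirs e \<gamma>)"
  by (auto simp: mdirs_binary distinct_map distinct_idx_enum intro: inj_on_subset)

lemma subseq_mdirs:
  fixes e :: "'n::finite \<Rightarrow> 'a"
  assumes "subseq vs (mdirs e \<alpha>)"
  shows "\<exists>\<alpha>'. (\<forall>i. \<alpha>' i \<le> \<alpha> i) \<and> vs = mdirs e \<alpha>'"
proof -
  have "\<exists>\<alpha>'. (\<forall>i. \<alpha>' i \<le> \<alpha> i) \<and> vs = concat (map (\<lambda>i. replicate (\<alpha>' i) (e i)) xs)"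
    if "distinct xs" "subseq vs (concat (map (\<lambda>i. replicate (\<alpha> i) (e i)) xs))" for xs :: "'n list"
    using that
  proof (induction xs arbitrary: vs)
    case Nil
    then show ?case by auto
  next
    case (Cons i xs)
    from Cons.prems(2) obtain v1 v2 where v: "vs = v1 @ v2"
      "subseq v1 (replicate (\<alpha> i) (e i))" "subseq v2 (concat (map (\<lambda>i. replicate (\<alpha> i) (e i)) xs))"
      by (auto elim: subseq_appendE)
    from Cons.IH[OF _ v(3)] Cons.prems(1) obtain \<alpha>' where
      \<alpha>': "\<forall>i. \<alpha>' i \<le> \<alpha> i" "v2 = concat (map (\<lambda>i. replicate (\<alpha>' i) (e i)) xs)"
      by auto
    let ?\<alpha> = "\<alpha>'(i := length v1)"
    have "concat (map (\<lambda>j. replicate (?\<alpha> j) (e j)) xs) = v2"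
      unfolding \<alpha>'(2) using Cons.prems(1) by (auto intro!: arg_cong[where f = concat])
    then have "vs = concat (map (\<lambda>j. replicate (?\<alpha> j) (e j)) (i # xs))"
      using subseq_replicate[OF v(2)] v(1) by simp
    moreover have "\<forall>j. ?\<alpha> j \<le> \<alpha> j"
      using \<alpha>'(1) subseq_replicate[OF v(2)] by simp
    ultimately show ?case
      by blast
  qed
  then show ?thesis
    using assms distinct_idx_enum unfolding mdirs_def by blast
qed

section \<open>The symbol class \<open>M\<^sup>0\<close>\<close>

definition x_dir :: "'n::finite \<Rightarrow> (real^'n) \<times> (real^'n)" where
  "x_dir i = (axis i 1, 0)"

definition xi_dir :: "'n::finite \<Rightarrow> (real^'n) \<times> (real^'n)" where
  "xi_dir i = (0, axis i 1)"

lemma Dxxi_eq_iter_dd: "Dxxi \<alpha> \<beta> f = iter_dd (mdirs x_dir \<alpha> @ mdirs xi_dir \<beta>) f"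
  unfolding Dxxi_def x_dir_def[abs_def] xi_dir_def[abs_def] ..

lemma x_dir_Basis: "x_dir i \<in> Basis" and xi_dir_Basis: "xi_dir i \<in> Basis"
  by (auto simp: x_dir_def xi_dir_def Basis_prod_def Basis_vec_def)

lemma inner_xi_dir: "z \<bullet> xi_dir i = snd z $ i"
  by (cases z) (simp add: xi_dir_def inner_axis)

lemma inj_xi_dir: "inj xi_dir"
  by (rule injI) (simp add: xi_dir_def axis_eq_axis)

text \<open>For 0/1-valued \<open>\<gamma>\<close> this word applied to \<open>\<sigma>\<close> is
  \<open>\<partial>\<^sub>x\<^sup>\<alpha> \<partial>\<^sub>\<xi>\<^sup>\<beta> (\<xi>\<^sup>\<gamma> \<partial>\<^sub>\<xi>\<^sup>\<gamma> \<sigma>)\<close>.\<close>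

definition symbol_fields :: "('n::finite \<Rightarrow> nat) \<Rightarrow> ('n \<Rightarrow> nat) \<Rightarrow> ('n \<Rightarrow> nat) \<Rightarrow>
    ((((real^'n) \<times> (real^'n)) \<Rightarrow> real) \<times> ((real^'n) \<times> (real^'n))) list" where
  "symbol_fields \<alpha> \<beta> \<gamma> =
     mdirs (unit_field \<circ> x_dir) \<alpha> @ mdirs (unit_field \<circ> xi_dir) \<beta> @ mdirs (euler_field \<circ> xi_dir) \<gamma>"

definition symbol_order :: "real \<Rightarrow> (((real^'n::finite) \<times> (real^'n) \<Rightarrow> real) \<times> ((real^'n) \<times> (real^'n))) \<Rightarrow> real" where
  "symbol_order \<rho> X = (if X \<in> range (unit_field \<circ> xi_dir) then \<rho> else 0)"

lemma smooth_fields_symbol_fields: "\<forall>X\<in>set (symbol_fields \<alpha> \<beta> \<gamma>). smooth_field X"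
proof -
  have "set (symbol_fields \<alpha> \<beta> \<gamma>) \<subseteq>
      range (unit_field \<circ> x_dir) \<union> range (unit_field \<circ> xi_dir) \<union> range (euler_field \<circ> xi_dir)"
    unfolding symbol_fields_def using set_mdirs by force
  moreover have "smooth_field (unit_field (x_dir i))" "smooth_field (unit_field (xi_dir i))"
    "smooth_field (euler_field (xi_dir i))" for i
    by (simp_all add: smooth_field_unit_field smooth_field_euler_field x_dir_Basis xi_dir_Basis)
  ultimately show ?thesis
    by fastforce
qed

lemma sum_list_symbol_order:
  fixes \<beta> :: "'n::finite \<Rightarrow> nat"
  shows "sum_list (map (symbol_order \<rho>) (symbol_fields \<alpha> \<beta> \<gamma>)) = \<rho> * real (mabs \<beta>)"
proof -
  have "unit_field (x_dir i) \<notin> range (unit_field \<circ> xi_dir)" for i :: 'n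
    by (auto simp: unit_field_def x_dir_def xi_dir_def axis_eq_0_iff)
  moreover have "euler_field (xi_dir i) \<notin> range (unit_field \<circ> xi_dir)" for i :: 'n
    using euler_field_neq_unit_field by auto
  ultimately show ?thesis
    by (simp add: symbol_fields_def symbol_order_def sum_list_mdirs mabs_def sum_distrib_left mult.commute)
qed

lemma subseq_symbol_fields:
  assumes "subseq Xs (symbol_fields \<alpha> \<beta> \<gamma>)"
  obtains \<alpha>' \<beta>' \<gamma>' where "\<forall>i. \<gamma>' i \<le> \<gamma> i" "Xs = symbol_fields \<alpha>' \<beta>' \<gamma>'"
proof -
  from assms obtain X1 X2 X3 where X: "Xs = X1 @ X2 @ X3" "subseq X1 (mdirs (unit_field \<circ> x_dir) \<alpha>)"
    "subseq X2 (mdirs (unit_field \<circ> xi_dir) \<beta>)" "subseq X3 (mdirs (euler_field \<circ> xi_dir) \<gamma>)"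
    unfolding symbol_fields_def by (auto elim!: subseq_appendE)
  obtain \<alpha>' \<beta>' \<gamma>' where "X1 = mdirs (unit_field \<circ> x_dir) \<alpha>'" "X2 = mdirs (unit_field \<circ> xi_dir) \<beta>'"
    "\<forall>i. \<gamma>' i \<le> \<gamma> i" "X3 = mdirs (euler_field \<circ> xi_dir) \<gamma>'"
    using subseq_mdirs[OF X(2)] subseq_mdirs[OF X(3)] subseq_mdirs[OF X(4)] by blast
  with X(1) that show ?thesis
    unfolding symbol_fields_def by blast
qed

definition euler_deriv :: "('n::finite \<Rightarrow> nat) \<Rightarrow> ((real^'n) \<times> (real^'n) \<Rightarrow> complex) \<Rightarrow>
    (real^'n) \<times> (real^'n) \<Rightarrow> complex" where
  "euler_deriv \<gamma> \<sigma> = (\<lambda>(x, \<xi>). complex_of_real (mpow \<xi> \<gamma>) * Dxxi (\<lambda>_. 0) \<gamma> \<sigma> (x, \<xi>))"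

lemma M_class_iff_euler_deriv:
  "\<sigma> \<in> M_class m \<rho> \<Lambda> \<longleftrightarrow> (\<forall>\<gamma>. (\<forall>j. \<gamma> j \<le> 1) \<longrightarrow> euler_deriv \<gamma> \<sigma> \<in> S_class m \<rho> \<Lambda>)"
  by (simp add: M_class_def euler_deriv_def)

lemma euler_deriv_zero: "euler_deriv (\<lambda>_. 0) \<sigma> = \<sigma>"
  by (auto simp: euler_deriv_def mpow_def Dxxi_eq_iter_dd)

lemma iter_field_deriv_symbol_fields:
  fixes \<gamma> :: "'n::finite \<Rightarrow> nat"
  assumes "smooth \<sigma>" "\<forall>j. \<gamma> j \<le> 1"
  shows "iter_field_deriv (symbol_fields \<alpha> \<beta> \<gamma>) \<sigma> = Dxxi \<alpha> \<beta> (euler_deriv \<gamma> \<sigma>)"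
proof -
  have basis: "set (mdirs xi_dir \<gamma>) \<subseteq> Basis"
    using set_mdirs[of xi_dir \<gamma>] xi_dir_Basis by blast
  have "(\<Prod>d\<leftarrow>mdirs xi_dir \<gamma>. z \<bullet> d) = mpow (snd z) \<gamma>" for z :: "(real^'n) \<times> (real^'n)"
    by (simp add: prod_list_mdirs mpow_def inner_xi_dir)
  then have "iter_field_deriv (map euler_field (mdirs xi_dir \<gamma>)) \<sigma> =
      (\<lambda>z. mpow (snd z) \<gamma> *\<^sub>R Dxxi (\<lambda>_. 0) \<gamma> \<sigma> z)"
    by (simp add: iter_field_deriv_euler_fields[OF assms(1) distinct_mdirs[OF inj_xi_dir assms(2)] basis]
        Dxxi_eq_iter_dd)
  also have "\<dots> = euler_deriv \<gamma> \<sigma>"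
    by (auto simp: euler_deriv_def scaleR_conv_of_real)
  finally show ?thesis
    unfolding symbol_fields_def mdirs_comp Dxxi_eq_iter_dd
    by (simp flip: iter_field_deriv_unit_fields)
qed

lemma smooth_euler_deriv:
  assumes "smooth \<sigma>" "\<forall>j. \<gamma> j \<le> 1"
  shows "smooth (euler_deriv \<gamma> \<sigma>)"
proof -
  have "euler_deriv \<gamma> \<sigma> = iter_field_deriv (symbol_fields (\<lambda>_. 0) (\<lambda>_. 0) \<gamma>) \<sigma>"
    using iter_field_deriv_symbol_fields[OF assms] by (simp add: Dxxi_eq_iter_dd)
  then show ?thesis
    using smooth_iter_field_deriv[OF smooth_fields_symbol_fields assms(1)] by simp
qed

lemma ex_pos_bound_iff:
  fixes a b :: "'a \<Rightarrow> real"
  assumes "\<And>z. 0 \<le> b z"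
  shows "(\<exists>C>0. \<forall>z. a z \<le> C * b z) \<longleftrightarrow> (\<exists>C. \<forall>z. a z \<le> C * b z)"
proof
  assume "\<exists>C. \<forall>z. a z \<le> C * b z"
  then obtain C where C: "\<And>z. a z \<le> C * b z"
    by blast
  have "a z \<le> max C 1 * b z" for z
  proof -
    have "C * b z \<le> max C 1 * b z"
      using assms by (simp add: mult_right_mono)
    then show ?thesis
      using C[of z] by linarith
  qed
  then show "\<exists>C>0. \<forall>z. a z \<le> C * b z"
    by (intro exI[of _ "max C 1"]) auto
qed blast

lemma Dxxi_euler_deriv_bound_iff:
  assumes "smooth \<sigma>" "\<forall>j. \<gamma> j \<le> 1"
  shows "(\<exists>C>0. \<forall>x \<xi>. norm (Dxxi \<alpha> \<beta> (euler_deriv \<gamma> \<sigma>) (x, \<xi>)) \<le> C * \<Lambda> \<xi> powr (0 - \<rho> * real (mabs \<beta>)))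
    \<longleftrightarrow> weighted_bound (\<lambda>z. \<Lambda> (snd z)) (symbol_order \<rho>) 0 (symbol_fields \<alpha> \<beta> \<gamma>) \<sigma>"
  using ex_pos_bound_iff[where a = "\<lambda>z. norm (Dxxi \<alpha> \<beta> (euler_deriv \<gamma> \<sigma>) z)"
      and b = "\<lambda>z. \<Lambda> (snd z) powr (0 - \<rho> * real (mabs \<beta>))"]
  unfolding weighted_bound_def iter_field_deriv_symbol_fields[OF assms] sum_list_symbol_order
  by (simp add: split_paired_All)

lemma M_class_zero_iff:
  fixes \<sigma> :: "(real^'n::finite) \<times> (real^'n) \<Rightarrow> complex"
  shows "\<sigma> \<in> M_class 0 \<rho> \<Lambda> \<longleftrightarrow> smooth \<sigma> \<and>
    (\<forall>\<alpha> \<beta> \<gamma>. (\<forall>j. \<gamma> j \<le> 1) \<longrightarrow>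
      weighted_bound (\<lambda>z. \<Lambda> (snd z)) (symbol_order \<rho>) 0 (symbol_fields \<alpha> \<beta> \<gamma>) \<sigma>)"
proof
  assume "\<sigma> \<in> M_class 0 \<rho> \<Lambda>"
  then have S: "euler_deriv \<gamma> \<sigma> \<in> S_class 0 \<rho> \<Lambda>" if "\<forall>j. \<gamma> j \<le> 1" for \<gamma>
    using that unfolding M_class_iff_euler_deriv by blast
  then have "smooth \<sigma>"
    using S[of "\<lambda>_. 0"] unfolding euler_deriv_zero S_class_def by simp
  with S show "smooth \<sigma> \<and> (\<forall>\<alpha> \<beta> \<gamma>. (\<forall>j. \<gamma> j \<le> 1) \<longrightarrow>
      weighted_bound (\<lambda>z. \<Lambda> (snd z)) (symbol_order \<rho>) 0 (symbol_fields \<alpha> \<beta> \<gamma>) \<sigma>)"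
    using Dxxi_euler_deriv_bound_iff unfolding S_class_def by blast
next
  assume "smooth \<sigma> \<and> (\<forall>\<alpha> \<beta> \<gamma>. (\<forall>j. \<gamma> j \<le> 1) \<longrightarrow>
      weighted_bound (\<lambda>z. \<Lambda> (snd z)) (symbol_order \<rho>) 0 (symbol_fields \<alpha> \<beta> \<gamma>) \<sigma>)"
  then show "\<sigma> \<in> M_class 0 \<rho> \<Lambda>"
    unfolding M_class_iff_euler_deriv S_class_def
    using Dxxi_euler_deriv_bound_iff smooth_euler_deriv by blast
qed

lemma weighted_bounds_symbol_fields:
  assumes "\<And>\<alpha> \<beta> \<gamma>. \<forall>j. \<gamma> j \<le> 1 \<Longrightarrow> weighted_bound W c m (symbol_fields \<alpha> \<beta> \<gamma>) f"
    and "\<forall>j. \<gamma> j \<le> 1"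
  shows "weighted_bounds W c m (symbol_fields \<alpha> \<beta> \<gamma>) f"
  unfolding weighted_bounds_def
proof (intro allI impI)
  fix Xs assume "subseq Xs (symbol_fields \<alpha> \<beta> \<gamma>)"
  then obtain \<alpha>' \<beta>' \<gamma>' where "\<forall>i. \<gamma>' i \<le> \<gamma> i" "Xs = symbol_fields \<alpha>' \<beta>' \<gamma>'"
    by (rule subseq_symbol_fields)
  with assms show "weighted_bound W c m Xs f"
    using order_trans by metis
qed

theorem mainTheorem6:
  fixes \<Lambda> :: "real^'n \<Rightarrow> real" and \<mu> \<rho> :: real
    and \<sigma> :: "(real^'n) \<times> (real^'n) \<Rightarrow> complex" and F :: "complex \<Rightarrow> complex"
  assumes "weight_fn \<Lambda> \<mu>"
    and "0 < \<rho>" and "\<rho> \<le> 1 / \<mu>"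
    and "\<sigma> \<in> M_class 0 \<rho> \<Lambda>"
    and "smooth F"
  shows "(\<lambda>z. F (\<sigma> z)) \<in> M_class 0 \<rho> \<Lambda>"
proof -
  have weight_pos: "\<And>z. 0 < \<Lambda> (snd z)"
    using assms(1) unfolding weight_fn_def by blast
  from assms(4) have \<sigma>: "smooth \<sigma>"
    "\<And>\<alpha> \<beta> \<gamma>. \<forall>j. \<gamma> j \<le> 1 \<Longrightarrow>
      weighted_bound (\<lambda>z. \<Lambda> (snd z)) (symbol_order \<rho>) 0 (symbol_fields \<alpha> \<beta> \<gamma>) \<sigma>"
    unfolding M_class_zero_iff by blast+
  show ?thesis
    unfolding M_class_zero_iff
  proof (intro conjI allI impI)
    show "smooth (\<lambda>z. F (\<sigma> z))"
      using smooth_compose[OF assms(5) \<sigma>(1)] .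
    fix \<alpha> \<beta> \<gamma> :: "'n \<Rightarrow> nat" assume "\<forall>j. \<gamma> j \<le> 1"
    then have "weighted_bounds (\<lambda>z. \<Lambda> (snd z)) (symbol_order \<rho>) 0 (symbol_fields \<alpha> \<beta> \<gamma>) (\<lambda>z. F (\<sigma> z))"
      using weighted_bounds_smooth_compose[where W = "\<lambda>z. \<Lambda> (snd z)",
          OF weight_pos smooth_fields_symbol_fields assms(5) \<sigma>(1)]
        weighted_bounds_symbol_fields[OF \<sigma>(2)] by blast
    then show "weighted_bound (\<lambda>z. \<Lambda> (snd z)) (symbol_order \<rho>) 0 (symbol_fields \<alpha> \<beta> \<gamma>) (\<lambda>z. F (\<sigma> z))"
      unfolding weighted_bounds_def by blast
  qed
qed

end
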